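(* For any graph $G$ with vertex set $[n]$, let $$f(G):=\min\{d\ge1:\ \exists \text{ subspaces } \mathcal{L}_1,\dots,\mathcal{L}_n\subseteq\mathbb{C}^d \text{ such that for all distinct } i,j\in[n],\ \mathcal{L}_i\perp\mathcal{L}_j \iff i\not\sim j\}.$$ Then $$f(G)=\min\{\mathrm{cpsd}\text{-}\mathrm{rank}(X):\ X \text{ is an } n\times n \text{ cpsd matrix with } S(X)=G\}.$$
   Context: Graphs are simple (no loops). An $n\times n$ matrix $X$ is completely positive semidefinite (cpsd) if there exist $d\ge1$ and Hermitian positive semidefinite $d\times d$ matrices $P_1,\dots,P_n$ with $X_{ij}=\mathrm{Tr}(P_iP_j)$ for all $i,j$; the cpsd-rank of $X$ is the least such $d$. The support graph $S(X)$ of a symmetric $n\times n$ matrix $X$ is the graph on $[n]$ with $u\sim v$ iff $u\ne v$ and $X_{uv}\neq0$. Orthogonality of subspaces is with respect to the standard inner product on $\mathbb{C}^d$. *)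

theory Defs
  imports "HOL-Analysis.Analysis"
begin

(* Vectors of C^d are represented as functions nat => complex vanishing outside {0..<d};
   d x d matrices as functions nat => nat => complex (only entries below d matter). *)

definition cvecs :: "nat \<Rightarrow> (nat \<Rightarrow> complex) set" where
  "cvecs d = {v. \<forall>i\<ge>d. v i = 0}"

definition cinner :: "nat \<Rightarrow> (nat \<Rightarrow> complex) \<Rightarrow> (nat \<Rightarrow> complex) \<Rightarrow> complex" where
  "cinner d u v = (\<Sum>i<d. u i * cnj (v i))"

definition is_subspace :: "nat \<Rightarrow> (nat \<Rightarrow> complex) set \<Rightarrow> bool" where
  "is_subspace d L \<longleftrightarrow> L \<subseteq> cvecs d \<and> (\<lambda>_. 0) \<in> L \<and>
     (\<forall>u\<in>L. \<forall>v\<in>L. (\<lambda>i. u i + v i) \<in> L) \<and>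
     (\<forall>c. \<forall>u\<in>L. (\<lambda>i. c * u i) \<in> L)"

definition orth :: "nat \<Rightarrow> (nat \<Rightarrow> complex) set \<Rightarrow> (nat \<Rightarrow> complex) set \<Rightarrow> bool" where
  "orth d L M \<longleftrightarrow> (\<forall>u\<in>L. \<forall>v\<in>M. cinner d u v = 0)"

definition hermitian_psd :: "nat \<Rightarrow> (nat \<Rightarrow> nat \<Rightarrow> complex) \<Rightarrow> bool" where
  "hermitian_psd d P \<longleftrightarrow> (\<forall>i<d. \<forall>j<d. P i j = cnj (P j i)) \<and>
     (\<forall>v. 0 \<le> Re (\<Sum>i<d. \<Sum>j<d. cnj (v i) * P i j * v j))"

definition trace_prod :: "nat \<Rightarrow> (nat \<Rightarrow> nat \<Rightarrow> complex) \<Rightarrow> (nat \<Rightarrow> nat \<Rightarrow> complex) \<Rightarrow> complex" where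
  "trace_prod d P Q = (\<Sum>a<d. \<Sum>b<d. P a b * Q b a)"

definition cpsd_factorization :: "nat \<Rightarrow> (nat \<Rightarrow> nat \<Rightarrow> real) \<Rightarrow> nat \<Rightarrow> bool" where
  "cpsd_factorization n X d \<longleftrightarrow> (\<exists>P :: nat \<Rightarrow> nat \<Rightarrow> nat \<Rightarrow> complex.
     (\<forall>i<n. hermitian_psd d (P i)) \<and>
     (\<forall>i<n. \<forall>j<n. complex_of_real (X i j) = trace_prod d (P i) (P j)))"

definition cpsd :: "nat \<Rightarrow> (nat \<Rightarrow> nat \<Rightarrow> real) \<Rightarrow> bool" where
  "cpsd n X \<longleftrightarrow> (\<exists>d\<ge>1. cpsd_factorization n X d)"

definition cpsd_rank :: "nat \<Rightarrow> (nat \<Rightarrow> nat \<Rightarrow> real) \<Rightarrow> nat" where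
  "cpsd_rank n X = (LEAST d. d \<ge> 1 \<and> cpsd_factorization n X d)"

definition simple_graph :: "nat \<Rightarrow> (nat \<Rightarrow> nat \<Rightarrow> bool) \<Rightarrow> bool" where
  "simple_graph n E \<longleftrightarrow> (\<forall>u<n. \<forall>v<n. E u v = E v u) \<and> (\<forall>u<n. \<not> E u u)"

definition support_is :: "nat \<Rightarrow> (nat \<Rightarrow> nat \<Rightarrow> real) \<Rightarrow> (nat \<Rightarrow> nat \<Rightarrow> bool) \<Rightarrow> bool" where
  "support_is n X E \<longleftrightarrow> (\<forall>u<n. \<forall>v<n. u \<noteq> v \<longrightarrow> (X u v \<noteq> 0 \<longleftrightarrow> E u v))"

definition f_graph :: "nat \<Rightarrow> (nat \<Rightarrow> nat \<Rightarrow> bool) \<Rightarrow> nat" where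
  "f_graph n E = (LEAST d. d \<ge> 1 \<and> (\<exists>L :: nat \<Rightarrow> (nat \<Rightarrow> complex) set.
      (\<forall>i<n. is_subspace d (L i)) \<and>
      (\<forall>i<n. \<forall>j<n. i \<noteq> j \<longrightarrow> (orth d (L i) (L j) \<longleftrightarrow> \<not> E i j))))"

end

theory Submission
  imports Defs
begin

text \<open>If \<open>X\<close> has a cpsd factorization of size \<open>d\<close>, write each \<open>P i\<close> as a Gram matrix
  \<open>\<Sum>k. u i k u i k\<^sup>*\<close> (Cholesky decomposition, by induction via Schur complements). Then
  \<open>X i j = \<Sum>k l. |\<langle>u i k, u j l\<rangle>|\<^sup>2\<close>, which vanishes exactly when the spans of the
  \<open>u i k\<close> and of the \<open>u j l\<close> are orthogonal, so these spans realise the support graph in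
  \<open>\<complex>\<^sup>d\<close>. Conversely, given subspaces of \<open>\<complex>\<^sup>d\<close> with the prescribed orthogonality
  pattern, choose for every non-orthogonal pair a pair of witness vectors with nonzero
  inner product and let \<open>P i\<close> be the Gram matrix of the witnesses lying in \<open>L i\<close>; the
  same formula shows that \<open>X i j = Tr (P i P j)\<close> has support exactly the graph.\<close>

lemma real_quadratic_nonneg_bound:
  fixes a p q :: real
  assumes nonneg: "\<And>s. 0 \<le> q - 2 * s * a + s\<^sup>2 * p * a" and "0 \<le> p"
  shows "a \<le> p * q"
proof (cases "p = 0")
  case True
  show ?thesis
  proof (rule ccontr)
    assume "\<not> a \<le> p * q"
    with True have "a > 0" by simp
    moreover have "a * q \<le> a * \<bar>q\<bar>" using \<open>a > 0\<close> by simp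
    ultimately show False
      using nonneg[of "(\<bar>q\<bar> + 1) / (2 * a)"] True by (simp add: field_simps)
  qed
next
  case False
  with \<open>0 \<le> p\<close> have "p > 0" by simp
  with nonneg[of "1 / p"] show ?thesis by (simp add: field_simps power2_eq_square)
qed

lemma Least_eq_Least_of_bounds:
  fixes A B :: "nat \<Rightarrow> bool"
  assumes AB: "\<And>a. A a \<Longrightarrow> \<exists>b. B b \<and> b \<le> a" and BA: "\<And>b. B b \<Longrightarrow> \<exists>a. A a \<and> a \<le> b"
  shows "(LEAST x. A x) = (LEAST x. B x)"
proof (cases "\<exists>a. A a")
  case True
  then have "A (LEAST x. A x)" by (rule LeastI_ex)
  then obtain b where "B b" "b \<le> (LEAST x. A x)" using AB by blast
  then have LB: "B (LEAST x. B x)" and le: "(LEAST x. B x) \<le> (LEAST x. A x)"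
    by (auto intro: LeastI Least_le order_trans)
  from LB obtain a where "A a" "a \<le> (LEAST x. B x)" using BA by blast
  then have "(LEAST x. A x) \<le> (LEAST x. B x)" by (meson Least_le order_trans)
  with le show ?thesis by simp
next
  case False
  with BA have "A = B" by blast
  then show ?thesis by simp
qed

lemma sum_sum_norm_power2_eq_0_iff:
  fixes K M :: nat
  shows "(\<Sum>k<K. \<Sum>l<M. (cmod (z k l))\<^sup>2) = 0 \<longleftrightarrow> (\<forall>k<K. \<forall>l<M. z k l = 0)"
proof -
  have "(\<Sum>k<K. \<Sum>l<M. (cmod (z k l))\<^sup>2) = 0 \<longleftrightarrow> (\<forall>k\<in>{..<K}. (\<Sum>l<M. (cmod (z k l))\<^sup>2) = 0)"
    by (rule sum_nonneg_eq_0_iff) (simp_all add: sum_nonneg)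
  also have "\<dots> \<longleftrightarrow> (\<forall>k<K. \<forall>l<M. z k l = 0)"
    by (auto simp: sum_nonneg_eq_0_iff)
  finally show ?thesis .
qed

definition cquad :: "nat \<Rightarrow> (nat \<Rightarrow> nat \<Rightarrow> complex) \<Rightarrow> (nat \<Rightarrow> complex) \<Rightarrow> complex" where
  "cquad d Q v = (\<Sum>i<d. \<Sum>j<d. cnj (v i) * Q i j * v j)"

lemma hermitian_psd_iff_cquad:
  "hermitian_psd d Q \<longleftrightarrow> (\<forall>i<d. \<forall>j<d. Q i j = cnj (Q j i)) \<and> (\<forall>v. 0 \<le> Re (cquad d Q v))"
  by (simp add: hermitian_psd_def cquad_def)

lemma hermitian_col_sum:
  assumes "\<forall>i<d. Q i k = cnj (Q k i)"
  shows "(\<Sum>i<d. cnj (v i) * Q i k) = cnj (\<Sum>j<d. Q k j * v j)"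
  using assms by (simp add: cnj_sum mult.commute)

lemma cquad_add_unit:
  assumes "k < d" and herm: "\<forall>i<d. Q i k = cnj (Q k i)"
  shows "cquad d Q (\<lambda>i. v i + (if i = k then t else 0)) = cquad d Q v
    + cnj t * (\<Sum>j<d. Q k j * v j) + t * cnj (\<Sum>j<d. Q k j * v j) + cnj t * t * Q k k"
proof -
  have expand: "cnj (v i + (if i = k then t else 0)) * Q i j * (v j + (if j = k then t else 0))
     = cnj (v i) * Q i j * v j + (if i = k then cnj t * (Q i j * v j) else 0)
       + (if j = k then t * (cnj (v i) * Q i j) else 0)
       + (if i = k then if j = k then cnj t * t * Q i j else 0 else 0)" for i j
    by (auto simp: algebra_simps)
  have row: "(\<Sum>i<d. \<Sum>j<d. if i = k then cnj t * (Q i j * v j) else 0) = cnj t * (\<Sum>j<d. Q k j * v j)"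
    using assms(1) by (subst sum.swap) (simp add: sum_distrib_left)
  have "(\<Sum>i<d. cnj (v i) * Q i k) = cnj (\<Sum>j<d. Q k j * v j)"
    using herm by (rule hermitian_col_sum)
  then have col: "(\<Sum>i<d. \<Sum>j<d. if j = k then t * (cnj (v i) * Q i j) else 0) = t * cnj (\<Sum>j<d. Q k j * v j)"
    using assms(1) by (simp add: sum_distrib_left[symmetric])
  have corner: "(\<Sum>i<d. \<Sum>j<d. if i = k then if j = k then cnj t * t * Q i j else 0 else 0)
      = cnj t * t * Q k k"
    using assms(1) by (simp add: sum.If_cases)
  show ?thesis
    unfolding cquad_def expand sum.distrib row col corner ..
qed

lemma hermitian_psd_diag:
  assumes "hermitian_psd d Q" "k < d"
  shows "Q k k = of_real (Re (Q k k))" "0 \<le> Re (Q k k)"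
proof -
  have herm: "\<forall>i<d. Q i k = cnj (Q k i)" and "Q k k = cnj (Q k k)"
    using assms unfolding hermitian_psd_def by blast+
  then show "Q k k = of_real (Re (Q k k))" by (simp add: complex_eq_iff)
  have "cquad d Q (\<lambda>i. (\<lambda>_. 0) i + (if i = k then 1 else 0)) = Q k k"
    unfolding cquad_add_unit[OF assms(2) herm] by (simp add: cquad_def)
  moreover have "0 \<le> Re (cquad d Q (\<lambda>i. (\<lambda>_. 0) i + (if i = k then 1 else 0)))"
    using assms(1) unfolding hermitian_psd_iff_cquad by blast
  ultimately show "0 \<le> Re (Q k k)" by simp
qed

lemma hermitian_psd_row_bound:
  assumes psd: "hermitian_psd d Q" and "k < d"
  shows "(cmod (\<Sum>j<d. Q k j * v j))\<^sup>2 \<le> Re (Q k k) * Re (cquad d Q v)"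
proof -
  define A where "A = (\<Sum>j<d. Q k j * v j)"
  define p where "p = Re (Q k k)"
  have herm: "\<forall>i<d. Q i k = cnj (Q k i)" using psd \<open>k < d\<close> unfolding hermitian_psd_def by blast
  have Qkk: "Q k k = of_real p" unfolding p_def by (rule hermitian_psd_diag(1)[OF assms])
  have "0 \<le> Re (cquad d Q v) - 2 * s * (cmod A)\<^sup>2 + s\<^sup>2 * p * (cmod A)\<^sup>2" for s
  proof -
    define t where "t = - of_real s * A"
    have "cnj t * A + t * cnj A + cnj t * t * Q k k
        = of_real (- 2 * s * (cmod A)\<^sup>2 + s\<^sup>2 * p * (cmod A)\<^sup>2)"
      unfolding of_real_add of_real_mult of_real_minus Qkk complex_norm_square
      by (simp add: t_def power2_eq_square algebra_simps)
    moreover have "0 \<le> Re (cquad d Q (\<lambda>i. v i + (if i = k then t else 0)))"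
      using psd unfolding hermitian_psd_iff_cquad by blast
    ultimately show ?thesis
      unfolding cquad_add_unit[OF \<open>k < d\<close> herm] A_def[symmetric] by (simp add: add.assoc)
  qed
  moreover have "0 \<le> p" unfolding p_def by (rule hermitian_psd_diag(2)[OF assms])
  ultimately show ?thesis
    unfolding A_def p_def by (rule real_quadratic_nonneg_bound)
qed

lemma hermitian_psd_SucD:
  assumes "hermitian_psd (Suc d) Q"
  shows "hermitian_psd d Q"
proof -
  have "cquad d Q v = cquad (Suc d) Q (v(d := 0))" for v
    unfolding cquad_def by (simp add: sum.lessThan_Suc)
  then show ?thesis using assms unfolding hermitian_psd_iff_cquad by (metis less_SucI)
qed

lemma hermitian_psd_zero_diag_imp_zero_row:
  assumes psd: "hermitian_psd d Q" and "k < d" "Re (Q k k) = 0" "j < d"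
  shows "Q k j = 0"
proof -
  have "(\<Sum>i<d. Q k i * (if i = j then 1 else 0)) = Q k j"
    using \<open>j < d\<close> by (simp add: if_distrib[of "\<lambda>x. Q k _ * x"] cong: if_cong)
  then show ?thesis
    using hermitian_psd_row_bound[OF psd \<open>k < d\<close>, of "\<lambda>i. if i = j then 1 else 0"] \<open>Re (Q k k) = 0\<close>
    by simp
qed

text \<open>If \<open>Q k k = 0\<close> the division yields \<open>0\<close>, so \<open>schur_compl k Q = Q\<close>; for psd \<open>Q\<close> the
  \<open>k\<close>-th row and column then vanish anyway.\<close>

definition schur_compl :: "nat \<Rightarrow> (nat \<Rightarrow> nat \<Rightarrow> complex) \<Rightarrow> nat \<Rightarrow> nat \<Rightarrow> complex" where
  "schur_compl k Q a b = Q a b - Q a k * Q k b / Q k k"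

lemma schur_compl_row_col_zero:
  assumes psd: "hermitian_psd d Q" and "k < d" "j < d"
  shows "schur_compl k Q k j = 0" "schur_compl k Q j k = 0"
proof -
  have herm: "Q j k = cnj (Q k j)" using psd assms(2,3) unfolding hermitian_psd_def by blast
  show "schur_compl k Q k j = 0" "schur_compl k Q j k = 0"
  proof (atomize(full), cases "Re (Q k k) = 0")
    case True
    then have "Q k j = 0" "Q k k = 0"
      using hermitian_psd_zero_diag_imp_zero_row[OF psd \<open>k < d\<close> True] assms(2,3) by auto
    then show "schur_compl k Q k j = 0 \<and> schur_compl k Q j k = 0"
      using herm by (simp add: schur_compl_def)
  next
    case False
    then have "Q k k \<noteq> 0" by auto
    then show "schur_compl k Q k j = 0 \<and> schur_compl k Q j k = 0"
      by (simp add: schur_compl_def)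
  qed
qed

lemma cquad_schur_compl:
  assumes herm: "\<forall>i<d. Q i k = cnj (Q k i)"
  shows "cquad d (schur_compl k Q) v
    = cquad d Q v - cnj (\<Sum>j<d. Q k j * v j) * (\<Sum>j<d. Q k j * v j) / Q k k"
proof -
  have "cnj (\<Sum>j<d. Q k j * v j) * (\<Sum>j<d. Q k j * v j) / Q k k
      = (\<Sum>i<d. cnj (v i) * Q i k) * (\<Sum>j<d. Q k j * v j) / Q k k"
    using hermitian_col_sum[OF herm] by simp
  also have "\<dots> = (\<Sum>i<d. \<Sum>j<d. cnj (v i) * Q i k * (Q k j * v j) / Q k k)"
    by (simp only: sum_product sum_divide_distrib)
  also have "\<dots> = (\<Sum>i<d. \<Sum>j<d. cnj (v i) * Q i j * v j - cnj (v i) * schur_compl k Q i j * v j)"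
    by (intro sum.cong refl) (simp add: schur_compl_def algebra_simps)
  also have "\<dots> = cquad d Q v - cquad d (schur_compl k Q) v"
    unfolding cquad_def by (simp only: sum_subtractf)
  finally show ?thesis by simp
qed

lemma hermitian_psd_schur_compl:
  assumes psd: "hermitian_psd d Q" and "k < d"
  shows "hermitian_psd d (schur_compl k Q)"
  unfolding hermitian_psd_iff_cquad
proof (intro conjI allI impI)
  fix i j assume "i < d" "j < d"
  then have "cnj (Q j i) = Q i j" "cnj (Q j k) = Q k j" "cnj (Q k i) = Q i k" "cnj (Q k k) = Q k k"
    using psd \<open>k < d\<close> unfolding hermitian_psd_def by (metis complex_cnj_cnj)+
  then show "schur_compl k Q i j = cnj (schur_compl k Q j i)"
    by (simp add: schur_compl_def mult.commute)
next
  define p where "p = Re (Q k k)"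
  have herm: "\<forall>i<d. Q i k = cnj (Q k i)" using psd \<open>k < d\<close> unfolding hermitian_psd_def by blast
  have Qkk: "Q k k = of_real p" unfolding p_def by (rule hermitian_psd_diag(1)[OF assms])
  fix v
  define A where "A = (\<Sum>j<d. Q k j * v j)"
  have "Re (cquad d (schur_compl k Q) v) = Re (cquad d Q v) - (cmod A)\<^sup>2 / p"
  proof -
    have "cnj A * A / Q k k = of_real ((cmod A)\<^sup>2 / p)"
      unfolding Qkk of_real_divide complex_norm_square by (simp add: mult.commute)
    then show ?thesis using cquad_schur_compl[OF herm, of v] unfolding A_def[symmetric] by simp
  qed
  moreover have "(cmod A)\<^sup>2 / p \<le> Re (cquad d Q v)"
  proof (cases "p = 0")
    case True
    then show ?thesis using psd unfolding hermitian_psd_iff_cquad by simp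
  next
    case False
    with hermitian_psd_diag(2)[OF assms] have "p > 0" by (simp add: p_def)
    with hermitian_psd_row_bound[OF assms, of v] show ?thesis
      by (simp add: A_def p_def pos_divide_le_eq mult.commute)
  qed
  ultimately show "0 \<le> Re (cquad d (schur_compl k Q) v)" by simp
qed

definition gram :: "nat \<Rightarrow> (nat \<Rightarrow> nat \<Rightarrow> complex) \<Rightarrow> nat \<Rightarrow> nat \<Rightarrow> complex" where
  "gram K u a b = (\<Sum>k<K. u k a * cnj (u k b))"

lemma gram_Suc_fun_upd:
  "gram (Suc K) (u(K := w)) a b = gram K u a b + w a * cnj (w b)"
  unfolding gram_def by simp

lemma hermitian_psd_imp_gram:
  assumes "hermitian_psd d Q"
  shows "\<exists>u. (\<forall>k. u k \<in> cvecs d) \<and> (\<forall>a<d. \<forall>b<d. Q a b = gram d u a b)"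
  using assms
proof (induction d arbitrary: Q)
  case 0
  show ?case by (auto simp: cvecs_def)
next
  case (Suc d)
  note psd = Suc.prems
  txt \<open>Split off the last column: \<open>Q = S + w w\<^sup>*\<close> with \<open>S\<close> the Schur complement at \<open>d\<close>,
    which is psd and supported on the first \<open>d\<close> coordinates.\<close>
  define S where "S = schur_compl d Q"
  have S_zero: "S d j = 0" "S j d = 0" if "j < Suc d" for j
    using schur_compl_row_col_zero[OF psd _ that] by (simp_all add: S_def)
  have "hermitian_psd d S"
    unfolding S_def by (rule hermitian_psd_SucD, rule hermitian_psd_schur_compl[OF psd]) simp
  with Suc.IH obtain u where u_vecs: "\<forall>k. u k \<in> cvecs d"
    and u_gram: "\<forall>a<d. \<forall>b<d. S a b = gram d u a b" by blast
  define w where "w a = (if a < Suc d then Q a d / of_real (sqrt (Re (Q d d))) else 0)" for a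
  show ?case
  proof (intro exI[of _ "u(d := w)"] conjI allI impI)
    fix k show "(u(d := w)) k \<in> cvecs (Suc d)"
      using u_vecs by (auto simp: w_def cvecs_def)
  next
    fix a b assume ab: "a < Suc d" "b < Suc d"
    have "Q a b = S a b + Q a d * Q d b / Q d d" by (simp add: S_def schur_compl_def)
    moreover have "S a b = gram d u a b"
    proof (cases "a < d \<and> b < d")
      case True
      then show ?thesis using u_gram by simp
    next
      case False
      then have "a = d \<or> b = d" using ab by auto
      moreover have "u k d = 0" for k using u_vecs by (simp add: cvecs_def)
      ultimately show ?thesis using S_zero ab by (auto simp: gram_def)
    qed
    moreover have "w a * cnj (w b) = Q a d * Q d b / Q d d"
    proof -
      define p where "p = Re (Q d d)"
      have "cnj (Q b d) = Q d b"
        using psd ab unfolding hermitian_psd_def by (metis complex_cnj_cnj lessI)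
      moreover have "of_real (sqrt p) * of_real (sqrt p) = Q d d"
        using hermitian_psd_diag[OF psd, of d] by (simp add: p_def flip: of_real_mult)
      ultimately show ?thesis using ab by (simp add: w_def p_def[symmetric])
    qed
    ultimately show "Q a b = gram (Suc d) (u(d := w)) a b"
      by (simp add: gram_Suc_fun_upd)
  qed
qed

lemma cquad_gram:
  "cquad d (gram K u) v = of_real (\<Sum>k<K. (cmod (cinner d v (u k)))\<^sup>2)"
proof -
  have "cquad d (gram K u) v = (\<Sum>k<K. \<Sum>i<d. \<Sum>j<d. cnj (v i * cnj (u k i)) * (v j * cnj (u k j)))"
    unfolding cquad_def gram_def
    by (simp add: sum_distrib_left sum_distrib_right mult_ac sum.swap[of _ "{..<K}"])
  also have "\<dots> = (\<Sum>k<K. cnj (cinner d v (u k)) * cinner d v (u k))"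
    unfolding cinner_def cnj_sum by (simp add: sum_product)
  also have "\<dots> = (\<Sum>k<K. of_real ((cmod (cinner d v (u k)))\<^sup>2))"
    by (simp only: complex_norm_square mult.commute)
  finally show ?thesis
    by (simp only: of_real_sum)
qed

lemma hermitian_psd_gram: "hermitian_psd d (gram K u)"
  unfolding hermitian_psd_iff_cquad cquad_gram
  by (auto simp: gram_def cnj_sum sum_nonneg mult.commute)

lemma trace_prod_gram_left: "trace_prod d (gram K u) Q = (\<Sum>k<K. cquad d Q (u k))"
proof -
  have "trace_prod d (gram K u) Q = (\<Sum>a<d. \<Sum>b<d. \<Sum>k<K. cnj (u k b) * Q b a * u k a)"
    unfolding trace_prod_def gram_def by (simp add: sum_distrib_left sum_distrib_right mult_ac)
  also have "\<dots> = (\<Sum>k<K. \<Sum>b<d. \<Sum>a<d. cnj (u k b) * Q b a * u k a)"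
    by (subst sum.swap, subst (2) sum.swap, rule sum.swap)
  finally show ?thesis unfolding cquad_def .
qed

lemma trace_prod_gram:
  "trace_prod d (gram K u) (gram M w) = of_real (\<Sum>k<K. \<Sum>l<M. (cmod (cinner d (u k) (w l)))\<^sup>2)"
  by (simp add: trace_prod_gram_left cquad_gram)

lemma trace_prod_cong:
  assumes "\<forall>a<d. \<forall>b<d. P a b = P' a b" and "\<forall>a<d. \<forall>b<d. Q a b = Q' a b"
  shows "trace_prod d P Q = trace_prod d P' Q'"
  using assms by (simp add: trace_prod_def)

lemma cinner_lincomb:
  "cinner d (\<lambda>a. \<Sum>k<K. c k * u k a) (\<lambda>a. \<Sum>l<M. c' l * w l a)
   = (\<Sum>k<K. \<Sum>l<M. c k * cnj (c' l) * cinner d (u k) (w l))"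
proof -
  have "cinner d (\<lambda>a. \<Sum>k<K. c k * u k a) (\<lambda>a. \<Sum>l<M. c' l * w l a)
      = (\<Sum>a<d. \<Sum>l<M. \<Sum>k<K. c k * cnj (c' l) * (u k a * cnj (w l a)))"
    unfolding cinner_def by (simp add: sum_distrib_left sum_distrib_right mult_ac)
  also have "\<dots> = (\<Sum>l<M. \<Sum>k<K. \<Sum>a<d. c k * cnj (c' l) * (u k a * cnj (w l a)))"
    by (subst sum.swap, subst (2) sum.swap, rule refl)
  also have "\<dots> = (\<Sum>k<K. \<Sum>l<M. c k * cnj (c' l) * cinner d (u k) (w l))"
    unfolding cinner_def by (subst sum.swap) (simp add: sum_distrib_left)
  finally show ?thesis .
qed

definition span_vecs :: "nat \<Rightarrow> (nat \<Rightarrow> nat \<Rightarrow> complex) \<Rightarrow> (nat \<Rightarrow> complex) set" where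
  "span_vecs K u = range (\<lambda>c a. \<Sum>k<K. c k * u k a)"

lemma span_vecs_generator:
  assumes "k < K"
  shows "u k \<in> span_vecs K u"
proof -
  have "(\<Sum>l<K. (if l = k then 1 else 0) * u l a) = u k a" for a
  proof -
    have "(\<Sum>l<K. (if l = k then 1 else 0) * u l a) = (\<Sum>l<K. if l = k then u l a else 0)"
      by (rule sum.cong) auto
    then show ?thesis using assms by simp
  qed
  then show ?thesis
    unfolding span_vecs_def by (intro image_eqI[of _ _ "\<lambda>l. if l = k then 1 else 0"]) auto
qed

lemma is_subspace_span_vecs:
  assumes "\<forall>k<K. u k \<in> cvecs d"
  shows "is_subspace d (span_vecs K u)"
  unfolding is_subspace_def
proof (intro conjI ballI allI)
  show "span_vecs K u \<subseteq> cvecs d"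
    using assms by (auto simp: span_vecs_def cvecs_def)
  show "(\<lambda>_. 0) \<in> span_vecs K u"
    unfolding span_vecs_def by (rule image_eqI[of _ _ "\<lambda>_. 0"]) auto
next
  fix v w assume "v \<in> span_vecs K u" "w \<in> span_vecs K u"
  then obtain c c' where "v = (\<lambda>a. \<Sum>k<K. c k * u k a)" "w = (\<lambda>a. \<Sum>k<K. c' k * u k a)"
    unfolding span_vecs_def by blast
  then show "(\<lambda>a. v a + w a) \<in> span_vecs K u"
    unfolding span_vecs_def
    by (intro image_eqI[of _ _ "\<lambda>k. c k + c' k"]) (auto simp: sum.distrib algebra_simps)
next
  fix z v assume "v \<in> span_vecs K u"
  then obtain c where "v = (\<lambda>a. \<Sum>k<K. c k * u k a)" unfolding span_vecs_def by blast
  then show "(\<lambda>a. z * v a) \<in> span_vecs K u"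
    unfolding span_vecs_def
    by (intro image_eqI[of _ _ "\<lambda>k. z * c k"]) (auto simp: sum_distrib_left mult_ac)
qed

lemma orth_span_vecs_iff:
  "orth d (span_vecs K u) (span_vecs M w) \<longleftrightarrow> (\<forall>k<K. \<forall>l<M. cinner d (u k) (w l) = 0)"
proof
  assume "orth d (span_vecs K u) (span_vecs M w)"
  then show "\<forall>k<K. \<forall>l<M. cinner d (u k) (w l) = 0"
    using span_vecs_generator unfolding orth_def by blast
next
  assume "\<forall>k<K. \<forall>l<M. cinner d (u k) (w l) = 0"
  then show "orth d (span_vecs K u) (span_vecs M w)"
    unfolding orth_def span_vecs_def by (auto simp: cinner_lincomb)
qed

lemma cpsd_factorization_imp_orth_pattern:
  assumes fac: "cpsd_factorization n X d" and supp: "support_is n X E"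
  shows "\<exists>L. (\<forall>i<n. is_subspace d (L i)) \<and>
    (\<forall>i<n. \<forall>j<n. i \<noteq> j \<longrightarrow> (orth d (L i) (L j) \<longleftrightarrow> \<not> E i j))"
proof -
  obtain P where psd: "\<forall>i<n. hermitian_psd d (P i)"
    and tr: "\<forall>i<n. \<forall>j<n. complex_of_real (X i j) = trace_prod d (P i) (P j)"
    using fac unfolding cpsd_factorization_def by blast
  have "\<forall>i\<in>{..<n}. \<exists>u. (\<forall>k. u k \<in> cvecs d) \<and> (\<forall>a<d. \<forall>b<d. P i a b = gram d u a b)"
    using psd hermitian_psd_imp_gram by blast
  then obtain u where u_vecs: "\<And>i k. i < n \<Longrightarrow> u i k \<in> cvecs d"
    and u_gram: "\<And>i. i < n \<Longrightarrow> \<forall>a<d. \<forall>b<d. P i a b = gram d (u i) a b"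
    by (metis bchoice lessThan_iff)
  have X_eq: "X i j = (\<Sum>k<d. \<Sum>l<d. (cmod (cinner d (u i k) (u j l)))\<^sup>2)" if "i < n" "j < n" for i j
  proof -
    have "complex_of_real (X i j) = trace_prod d (gram d (u i)) (gram d (u j))"
      using tr trace_prod_cong[OF u_gram u_gram] that by simp
    then show ?thesis unfolding trace_prod_gram of_real_eq_iff .
  qed
  show ?thesis
  proof (intro exI[of _ "\<lambda>i. span_vecs d (u i)"] conjI allI impI)
    fix i assume "i < n"
    then show "is_subspace d (span_vecs d (u i))"
      using u_vecs by (simp add: is_subspace_span_vecs)
  next
    fix i j assume ij: "i < n" "j < n" "i \<noteq> j"
    have "orth d (span_vecs d (u i)) (span_vecs d (u j)) \<longleftrightarrow> X i j = 0"
      unfolding orth_span_vecs_iff X_eq[OF ij(1,2)] sum_sum_norm_power2_eq_0_iff ..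
    also have "\<dots> \<longleftrightarrow> \<not> E i j" using supp ij unfolding support_is_def by blast
    finally show "orth d (span_vecs d (u i)) (span_vecs d (u j)) \<longleftrightarrow> \<not> E i j" .
  qed
qed

lemma orth_pattern_imp_cpsd_factorization:
  assumes pattern: "\<forall>i<n. \<forall>j<n. i \<noteq> j \<longrightarrow> (orth d (L i) (L j) \<longleftrightarrow> \<not> E i j)"
  shows "\<exists>X. cpsd_factorization n X d \<and> support_is n X E"
proof -
  have "\<exists>x y. (x \<in> L i \<or> x = (\<lambda>_. 0)) \<and> (y \<in> L j \<or> y = (\<lambda>_. 0))
      \<and> (\<not> orth d (L i) (L j) \<longrightarrow> cinner d x y \<noteq> 0)" for i j
    by (cases "orth d (L i) (L j)") (auto simp: orth_def)
  then obtain x y where xy_in: "\<And>i j. x i j \<in> L i \<or> x i j = (\<lambda>_. 0)" "\<And>i j. y i j \<in> L j \<or> y i j = (\<lambda>_. 0)"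
    and xy_witness: "\<And>i j. \<not> orth d (L i) (L j) \<Longrightarrow> cinner d (x i j) (y i j) \<noteq> 0"
    by metis
  txt \<open>Vertex \<open>i\<close> gets its end \<open>x i j\<close> of every pair \<open>(i, j)\<close> and its end \<open>y j i\<close> of
    every pair \<open>(j, i)\<close>.\<close>
  define w where "w i k = (if k < n then x i k else y (k - n) i)" for i k
  have w_in: "w i k \<in> L i \<or> w i k = (\<lambda>_. 0)" for i k
    using xy_in unfolding w_def by auto
  define X where "X i j = (\<Sum>k<2*n. \<Sum>l<2*n. (cmod (cinner d (w i k) (w j l)))\<^sup>2)" for i j
  have "cpsd_factorization n X d"
    unfolding cpsd_factorization_def X_def
    by (intro exI[of _ "\<lambda>i. gram (2*n) (w i)"]) (simp add: hermitian_psd_gram trace_prod_gram)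
  moreover have "support_is n X E"
    unfolding support_is_def
  proof (intro allI impI)
    fix i j assume ij: "i < n" "j < n" "i \<noteq> j"
    have "X i j \<noteq> 0 \<longleftrightarrow> (\<exists>k<2*n. \<exists>l<2*n. cinner d (w i k) (w j l) \<noteq> 0)"
      unfolding X_def sum_sum_norm_power2_eq_0_iff by blast
    also have "\<dots> \<longleftrightarrow> \<not> orth d (L i) (L j)"
    proof
      assume "\<exists>k<2*n. \<exists>l<2*n. cinner d (w i k) (w j l) \<noteq> 0"
      then obtain k l where nonzero: "cinner d (w i k) (w j l) \<noteq> 0" by blast
      then have "w i k \<in> L i" "w j l \<in> L j"
        using w_in[of i k] w_in[of j l] by (auto simp: cinner_def)
      with nonzero show "\<not> orth d (L i) (L j)" unfolding orth_def by blast
    next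
      assume "\<not> orth d (L i) (L j)"
      then have "cinner d (w i j) (w j (n + i)) \<noteq> 0"
        using xy_witness ij by (simp add: w_def)
      moreover have "j < 2 * n" "n + i < 2 * n" using ij by auto
      ultimately show "\<exists>k<2*n. \<exists>l<2*n. cinner d (w i k) (w j l) \<noteq> 0" by blast
    qed
    also have "\<dots> \<longleftrightarrow> E i j" using pattern ij by blast
    finally show "X i j \<noteq> 0 \<longleftrightarrow> E i j" .
  qed
  ultimately show ?thesis by blast
qed

lemma cpsd_rank_factorization:
  assumes "cpsd n X"
  shows "1 \<le> cpsd_rank n X" "cpsd_factorization n X (cpsd_rank n X)"
  using LeastI_ex[of "\<lambda>d. 1 \<le> d \<and> cpsd_factorization n X d"] assms
  unfolding cpsd_rank_def cpsd_def by auto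

lemma cpsd_rank_le:
  assumes "1 \<le> d" "cpsd_factorization n X d"
  shows "cpsd n X" "cpsd_rank n X \<le> d"
  using assms unfolding cpsd_def cpsd_rank_def by (auto intro: Least_le)

theorem theorem3p9:
  fixes n :: nat and E :: "nat \<Rightarrow> nat \<Rightarrow> bool"
  assumes "simple_graph n E"
  shows "f_graph n E = (LEAST r. \<exists>X. cpsd n X \<and> support_is n X E \<and> r = cpsd_rank n X)"
  unfolding f_graph_def
proof (rule Least_eq_Least_of_bounds)
  fix d assume "1 \<le> d \<and> (\<exists>L. (\<forall>i<n. is_subspace d (L i)) \<and>
      (\<forall>i<n. \<forall>j<n. i \<noteq> j \<longrightarrow> (orth d (L i) (L j) \<longleftrightarrow> \<not> E i j)))"
  then obtain L where d: "1 \<le> d"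
    and pattern: "\<forall>i<n. \<forall>j<n. i \<noteq> j \<longrightarrow> (orth d (L i) (L j) \<longleftrightarrow> \<not> E i j)"
    by blast
  obtain X where X: "cpsd_factorization n X d" "support_is n X E"
    using orth_pattern_imp_cpsd_factorization[OF pattern] by blast
  show "\<exists>r. (\<exists>X. cpsd n X \<and> support_is n X E \<and> r = cpsd_rank n X) \<and> r \<le> d"
    using cpsd_rank_le[OF d X(1)] X(2) by (intro exI[of _ "cpsd_rank n X"]) blast
next
  fix r assume "\<exists>X. cpsd n X \<and> support_is n X E \<and> r = cpsd_rank n X"
  then obtain X where X: "cpsd n X" "support_is n X E" and r: "r = cpsd_rank n X" by blast
  obtain L where L: "\<forall>i<n. is_subspace r (L i)"
      "\<forall>i<n. \<forall>j<n. i \<noteq> j \<longrightarrow> (orth r (L i) (L j) \<longleftrightarrow> \<not> E i j)"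
    using cpsd_factorization_imp_orth_pattern[OF cpsd_rank_factorization(2)[OF X(1)] X(2)]
    unfolding r by blast
  show "\<exists>d. (1 \<le> d \<and> (\<exists>L. (\<forall>i<n. is_subspace d (L i)) \<and>
      (\<forall>i<n. \<forall>j<n. i \<noteq> j \<longrightarrow> (orth d (L i) (L j) \<longleftrightarrow> \<not> E i j)))) \<and> d \<le> r"
    using L cpsd_rank_factorization(1)[OF X(1)] unfolding r[symmetric]
    by (intro exI[of _ r] conjI exI[of _ L]) simp_all
qed

end
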